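(* Consider two agents with weights $(w_1,w_2)$, where $r:=w_2/w_1\ge1$, and $m$ items with each utility $u_i(g)$ drawn independently from a PDF-bounded distribution $\mathcal{D}$. Then with probability at least $1-O(m^2/r)$, no weighted envy-free (WEF) allocation exists. The same holds for weighted proportionality (WPROP).
   Context: Utilities are additive. PDF-bounded: non-atomic with density between constants $\alpha,\beta>0$ on $[0,1]$. An allocation $(A_1,A_2)$ (partition of the items $M$) is WEF if $u_i(A_i)/w_i\ge u_i(A_j)/w_j$ for $i,j\in\{1,2\}$, and WPROP if $u_i(A_i)\ge\frac{w_i}{w_1+w_2}u_i(M)$ for $i\in\{1,2\}$. *)

theory Defs
  imports "HOL-Probability.Probability"
begin

definition pdf_bounded :: "real \<Rightarrow> real \<Rightarrow> real measure \<Rightarrow> bool" where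
  "pdf_bounded \<alpha> \<beta> D \<longleftrightarrow>
     (\<exists>f. f \<in> borel_measurable lborel
        \<and> (\<forall>x\<in>{0..1}. \<alpha> \<le> f x \<and> f x \<le> \<beta>)
        \<and> (\<forall>x. x \<notin> {0..1} \<longrightarrow> f x = 0)
        \<and> D = density lborel (\<lambda>x. ennreal (f x)))"

definition bundle_val :: "(nat \<times> nat \<Rightarrow> real) \<Rightarrow> nat \<Rightarrow> nat set \<Rightarrow> real" where
  "bundle_val u i S = (\<Sum>g\<in>S. u (i, g))"

definition is_alloc :: "nat set \<Rightarrow> (nat \<Rightarrow> nat set) \<Rightarrow> bool" where
  "is_alloc M A \<longleftrightarrow> A 1 \<union> A 2 = M \<and> A 1 \<inter> A 2 = {}"

definition WEF :: "(nat \<Rightarrow> real) \<Rightarrow> (nat \<times> nat \<Rightarrow> real) \<Rightarrow> (nat \<Rightarrow> nat set) \<Rightarrow> bool" where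
  "WEF w u A \<longleftrightarrow> (\<forall>i\<in>{1,2}. \<forall>j\<in>{1,2}.
      bundle_val u i (A i) / w i \<ge> bundle_val u i (A j) / w j)"

definition WPROP :: "(nat \<Rightarrow> real) \<Rightarrow> (nat \<times> nat \<Rightarrow> real) \<Rightarrow> nat set \<Rightarrow> (nat \<Rightarrow> nat set) \<Rightarrow> bool" where
  "WPROP w u M A \<longleftrightarrow> (\<forall>i\<in>{1,2}.
      bundle_val u i (A i) \<ge> w i / (w 1 + w 2) * bundle_val u i M)"

definition utility_space :: "real measure \<Rightarrow> nat \<Rightarrow> (nat \<times> nat \<Rightarrow> real) measure" where
  "utility_space D m = PiM ({1,2} \<times> {..<m}) (\<lambda>_. D)"

end

theory Submission
  imports Defs
begin

text \<open>If every utility lies in \<open>(m/r, 1]\<close>, no allocation is WEF: if agent 1 receives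
  nothing, she envies agent 2, and if she receives an item \<open>g\<close>, then WEF for agent 2 demands
  \<open>u\<^sub>2(A\<^sub>2) \<ge> r u\<^sub>2(A\<^sub>1) \<ge> r u\<^sub>2(g) > m\<close>, while \<open>u\<^sub>2(A\<^sub>2) \<le> m\<close>.
  A PDF-bounded utility misses \<open>(m/r, 1]\<close> with probability at most \<open>\<beta> m/r\<close>, so by independence
  and Bernoulli's inequality all \<open>2m\<close> utilities lie in it with probability at least
  \<open>1 - 2\<beta>m\<^sup>2/r\<close>. For two agents WPROP is equivalent to WEF, since
  \<open>u\<^sub>i(A\<^sub>j) = u\<^sub>i(M) - u\<^sub>i(A\<^sub>i)\<close>.\<close>

lemma bundle_val_alloc:
  assumes "is_alloc M A" and "finite M"
  shows "bundle_val u i M = bundle_val u i (A 1) + bundle_val u i (A 2)"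
  using assms unfolding is_alloc_def bundle_val_def
  by (metis finite_Un sum.union_disjoint)

lemma WEF_iff_WPROP:
  assumes "is_alloc M A" and "finite M" and "w 1 > 0" and "w 2 > 0"
  shows "WEF w u A \<longleftrightarrow> WPROP w u M A"
  using assms(3,4) bundle_val_alloc[OF assms(1,2)]
  unfolding WEF_def WPROP_def by (simp add: field_simps)

lemma not_WEF_if_utilities_in:
  fixes w :: "nat \<Rightarrow> real"
  assumes "is_alloc M A" and "finite M" and "M \<noteq> {}" and "w 1 > 0" and "w 2 > 0"
    and u: "\<forall>x\<in>{1,2} \<times> M. u x \<in> {real (card M) * w 1 / w 2<..1}"
  shows "\<not> WEF w u A"
proof
  assume WEF: "WEF w u A"
  have A: "A 1 \<union> A 2 = M" "A 1 \<inter> A 2 = {}"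
    using assms(1) unfolding is_alloc_def by auto
  have u_pos: "u (i, g) > 0" if "i \<in> {1,2}" "g \<in> M" for i g
    using u that assms(4,5) by (fastforce intro: le_less_trans[rotated])
  show False
  proof (cases "A 1 = {}")
    case True
    then have "bundle_val u 1 (A 2) > 0"
      using A assms(2,3) u_pos unfolding bundle_val_def by (intro sum_pos) auto
    moreover have "bundle_val u 1 (A 1) / w 1 \<ge> bundle_val u 1 (A 2) / w 2"
      using WEF unfolding WEF_def by auto
    ultimately show False
      using True assms(5) by (simp add: bundle_val_def divide_le_0_iff)
  next
    case False
    then obtain g where g: "g \<in> A 1" by blast
    have "real (card M) * w 1 / w 2 < u (2, g)"
      using u g A by auto
    also have "\<dots> \<le> bundle_val u 2 (A 1)"
      unfolding bundle_val_def using g A assms(2) u_pos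
      by (intro member_le_sum) (auto intro: less_imp_le finite_subset)
    finally have "real (card M) * w 1 < w 2 * bundle_val u 2 (A 1)"
      using assms(5) by (simp add: field_simps)
    also have "\<dots> \<le> w 1 * bundle_val u 2 (A 2)"
      using WEF assms(4,5) unfolding WEF_def by (auto simp: field_simps)
    also have "\<dots> \<le> w 1 * card M"
    proof -
      have "bundle_val u 2 (A 2) \<le> card (A 2)"
        using u A unfolding bundle_val_def by (intro sum_bounded_above[where K = 1, simplified]) auto
      also have "\<dots> \<le> card M"
        using A assms(2) by (metis Un_upper2 card_mono of_nat_le_iff)
      finally show ?thesis
        using assms(4) by simp
    qed
    finally show False
      by simp
  qed
qed

definition split_alloc :: "nat set \<Rightarrow> nat set \<Rightarrow> nat \<Rightarrow> nat set" where
  "split_alloc M S = (\<lambda>i. if i = 1 then S else M - S)"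

text \<open>Replacing the quantifier over all allocations by a finite one makes the event measurable.\<close>

lemma ex_WEF_alloc_iff_ex_subset:
  "(\<exists>A. is_alloc M A \<and> WEF w u A) \<longleftrightarrow> (\<exists>S\<in>Pow M. WEF w u (split_alloc M S))"
proof
  assume "\<exists>A. is_alloc M A \<and> WEF w u A"
  then obtain A where "is_alloc M A" "WEF w u A" by blast
  moreover from \<open>is_alloc M A\<close> have "A 1 \<in> Pow M" and "A 2 = M - A 1"
    unfolding is_alloc_def by auto
  moreover from \<open>A 2 = M - A 1\<close> have "WEF w u (split_alloc M (A 1)) = WEF w u A"
    unfolding WEF_def split_alloc_def by simp
  ultimately show "\<exists>S\<in>Pow M. WEF w u (split_alloc M S)"
    by auto
next
  assume "\<exists>S\<in>Pow M. WEF w u (split_alloc M S)"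
  then obtain S where "S \<subseteq> M" and "WEF w u (split_alloc M S)"
    by blast
  moreover from \<open>S \<subseteq> M\<close> have "is_alloc M (split_alloc M S)"
    unfolding is_alloc_def split_alloc_def by auto
  ultimately show "\<exists>A. is_alloc M A \<and> WEF w u A"
    by blast
qed

lemma measurable_bundle_val:
  assumes "{i} \<times> S \<subseteq> I" and "sets D = sets borel"
  shows "(\<lambda>u. bundle_val u i S) \<in> borel_measurable (PiM I (\<lambda>_. D))"
  unfolding bundle_val_def
proof (intro borel_measurable_sum)
  fix g assume "g \<in> S"
  with assms(1) have "(\<lambda>u. u (i, g)) \<in> measurable (PiM I (\<lambda>_. D)) D"
    by (intro measurable_component_singleton) auto
  then show "(\<lambda>u. u (i, g)) \<in> borel_measurable (PiM I (\<lambda>_. D))"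
    using measurable_cong_sets[OF refl assms(2)] by blast
qed

lemma sets_no_WEF_alloc:
  assumes "finite M" and "sets D = sets borel"
  shows "{u \<in> space (PiM ({1,2} \<times> M) (\<lambda>_. D)). \<not> (\<exists>A. is_alloc M A \<and> WEF w u A)}
           \<in> sets (PiM ({1,2} \<times> M) (\<lambda>_. D))"
proof -
  have "Measurable.pred (PiM ({1,2} \<times> M) (\<lambda>_. D)) (\<lambda>u. WEF w u (split_alloc M S))"
    if "S \<subseteq> M" for S
  proof -
    have sub: "{i} \<times> split_alloc M S j \<subseteq> {1,2} \<times> M" if "i \<in> {1,2::nat}" for i j
      using \<open>S \<subseteq> M\<close> that by (auto simp: split_alloc_def)
    have "(\<lambda>u. bundle_val u i (split_alloc M S j)) \<in> borel_measurable (PiM ({1,2} \<times> M) (\<lambda>_. D))"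
      if "i \<in> {1,2::nat}" for i j
      using sub[OF that] assms(2) by (rule measurable_bundle_val)
    then show ?thesis
      unfolding WEF_def pred_def
      by (intro pred_intros_finite(3)[unfolded pred_def] finite.intros borel_measurable_le
          borel_measurable_divide borel_measurable_const) auto
  qed
  then have "Measurable.pred (PiM ({1,2} \<times> M) (\<lambda>_. D)) (\<lambda>u. \<not> (\<exists>S\<in>Pow M. WEF w u (split_alloc M S)))"
    using assms(1) by (intro pred_intros_logic(2) pred_intros_finite(4)) auto
  then show ?thesis
    unfolding ex_WEF_alloc_iff_ex_subset pred_def .
qed

lemma sets_pdf_bounded: "pdf_bounded \<alpha> \<beta> D \<Longrightarrow> sets D = sets borel"
  unfolding pdf_bounded_def by auto

lemma pdf_bounded_measure_outside_le:
  assumes "pdf_bounded \<alpha> \<beta> D" and "c \<ge> 0" and "\<beta> > 0"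
  shows "measure D (- {c<..1}) \<le> \<beta> * c"
proof -
  obtain f where f: "f \<in> borel_measurable lborel" and f_le: "\<forall>x\<in>{0..1}. f x \<le> \<beta>"
    and f_zero: "\<forall>x. x \<notin> {0..1} \<longrightarrow> f x = 0" and D: "D = density lborel (\<lambda>x. ennreal (f x))"
    using assms(1) unfolding pdf_bounded_def by blast
  have "emeasure D (- {c<..1}) = (\<integral>\<^sup>+ x. ennreal (f x) * indicator (- {c<..1}) x \<partial>lborel)"
    using f unfolding D by (subst emeasure_density) auto
  also have "\<dots> \<le> (\<integral>\<^sup>+ x. ennreal \<beta> * indicator {0..c} x \<partial>lborel)"
    using f_le f_zero assms(3)
    by (intro nn_integral_mono) (auto simp: indicator_def not_le intro!: ennreal_leI)
  also have "\<dots> = ennreal (\<beta> * c)"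
    using assms(2,3) by (simp add: nn_integral_cmult_indicator ennreal_mult)
  finally show ?thesis
    using assms(2,3) by (simp add: measure_def enn2real_leI)
qed

lemma prob_PiM_all_in_ge:
  assumes "prob_space D" and "finite I" and "B \<in> sets D"
  shows "measure (PiM I (\<lambda>_. D)) {u \<in> space (PiM I (\<lambda>_. D)). \<forall>x\<in>I. u x \<in> B}
           \<ge> 1 - card I * measure D (space D - B)"
proof -
  interpret D: prob_space D by fact
  interpret product_prob_space "\<lambda>_. D" I
    by unfold_locales
  have "measure (PiM I (\<lambda>_. D)) {u \<in> space (PiM I (\<lambda>_. D)). \<forall>x\<in>I. u x \<in> B} = measure D B ^ card I"
    using emeasure_PiM_Collect[of I "\<lambda>_. B"] assms
    by (simp add: emeasure_eq_measure D.emeasure_eq_measure ennreal_power)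
  moreover have "1 - card I * measure D (space D - B) \<le> (1 - measure D (space D - B)) ^ card I"
    using Bernoulli_inequality[of "- measure D (space D - B)" "card I"] by simp
  ultimately show ?thesis
    using D.prob_compl[OF assms(3)] by simp
qed

lemma prob_utilities_in_ge:
  assumes "pdf_bounded \<alpha> \<beta> D" and "prob_space D" and "\<beta> > 0" and "c \<ge> 0"
  shows "measure (utility_space D m)
           {u \<in> space (utility_space D m). \<forall>x\<in>{1,2} \<times> {..<m}. u x \<in> {c<..1}}
         \<ge> 1 - 2 * real m * (\<beta> * c)"
proof -
  have sets_D: "sets D = sets borel"
    using assms(1) by (rule sets_pdf_bounded)
  then have "measure D (space D - {c<..1}) \<le> \<beta> * c"
    using pdf_bounded_measure_outside_le[OF assms(1,4,3)] sets_eq_imp_space_eq[OF sets_D]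
    by (simp add: Compl_eq_Diff_UNIV)
  then have "1 - 2 * real m * (\<beta> * c)
               \<le> 1 - real (card ({1,2::nat} \<times> {..<m})) * measure D (space D - {c<..1})"
    by (simp add: card_cartesian_product mult_left_mono)
  also have "\<dots> \<le> measure (utility_space D m)
                   {u \<in> space (utility_space D m). \<forall>x\<in>{1,2} \<times> {..<m}. u x \<in> {c<..1}}"
    unfolding utility_space_def using assms(2) sets_D by (intro prob_PiM_all_in_ge) auto
  finally show ?thesis .
qed

lemma prob_no_WEF_alloc_ge:
  fixes w :: "nat \<Rightarrow> real"
  assumes "pdf_bounded \<alpha> \<beta> D" and "prob_space D" and "\<beta> > 0"
    and "m \<ge> 1" and "w 1 > 0" and "w 2 > 0"
  shows "measure (utility_space D m)
           {u \<in> space (utility_space D m). \<not> (\<exists>A. is_alloc {..<m} A \<and> WEF w u A)}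
         \<ge> 1 - 2 * \<beta> * real m ^ 2 / (w 2 / w 1)" (is "measure ?P ?NoWEF \<ge> _")
proof -
  define c where "c = real m * w 1 / w 2"
  let ?Good = "{u \<in> space ?P. \<forall>x\<in>{1,2} \<times> {..<m}. u x \<in> {c<..1}}"
  interpret P: prob_space ?P
    unfolding utility_space_def using assms(2) by (rule prob_space_PiM)
  have "{..<m} \<noteq> {}"
    using assms(4) by (simp add: lessThan_empty_iff)
  have "1 - 2 * \<beta> * real m ^ 2 / (w 2 / w 1) = 1 - 2 * real m * (\<beta> * c)"
    using assms(5,6) by (simp add: c_def power2_eq_square field_simps)
  also have "\<dots> \<le> measure ?P ?Good"
    using assms(5,6) by (intro prob_utilities_in_ge[OF assms(1-3)]) (simp add: c_def)
  also have "\<dots> \<le> measure ?P ?NoWEF"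
  proof (rule P.finite_measure_mono)
    show "?Good \<subseteq> ?NoWEF"
      using \<open>{..<m} \<noteq> {}\<close> assms(5,6) not_WEF_if_utilities_in[of "{..<m}" _ w]
      unfolding c_def by auto
    show "?NoWEF \<in> sets ?P"
      unfolding utility_space_def using sets_pdf_bounded[OF assms(1)]
      by (intro sets_no_WEF_alloc) auto
  qed
  finally show ?thesis .
qed

theorem theorem5:
  fixes \<alpha> \<beta> :: real
  assumes "\<alpha> > 0" and "\<beta> > 0"
  shows "\<exists>C::real. \<forall>(D::real measure) (m::nat) (w::nat \<Rightarrow> real).
     pdf_bounded \<alpha> \<beta> D \<longrightarrow> prob_space D \<longrightarrow> m \<ge> 1 \<longrightarrow>
     w 1 > 0 \<longrightarrow> w 2 > 0 \<longrightarrow> w 2 / w 1 \<ge> 1 \<longrightarrow>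
     (let P = utility_space D m; r = w 2 / w 1;
          NoWEF = {u \<in> space P. \<not> (\<exists>A. is_alloc {..<m} A \<and> WEF w u A)};
          NoWPROP = {u \<in> space P. \<not> (\<exists>A. is_alloc {..<m} A \<and> WPROP w u {..<m} A)}
      in NoWEF \<in> sets P \<and> measure P NoWEF \<ge> 1 - C * real m ^ 2 / r
       \<and> NoWPROP \<in> sets P \<and> measure P NoWPROP \<ge> 1 - C * real m ^ 2 / r)"
proof (intro exI[of _ "2 * \<beta>"] allI impI, goal_cases)
  case (1 D m w)
  have "w 1 > 0" and "w 2 > 0"
    using 1 by simp_all
  have "{u \<in> space (utility_space D m). \<not> (\<exists>A. is_alloc {..<m} A \<and> WPROP w u {..<m} A)}
          = {u \<in> space (utility_space D m). \<not> (\<exists>A. is_alloc {..<m} A \<and> WEF w u A)}"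
    using WEF_iff_WPROP[of "{..<m}" _ w] \<open>w 1 > 0\<close> \<open>w 2 > 0\<close> by auto
  moreover have "{u \<in> space (utility_space D m). \<not> (\<exists>A. is_alloc {..<m} A \<and> WEF w u A)}
                   \<in> sets (utility_space D m)"
    unfolding utility_space_def using sets_pdf_bounded[OF 1(1)]
    by (intro sets_no_WEF_alloc) auto
  moreover have "measure (utility_space D m)
                   {u \<in> space (utility_space D m). \<not> (\<exists>A. is_alloc {..<m} A \<and> WEF w u A)}
                 \<ge> 1 - 2 * \<beta> * real m ^ 2 / (w 2 / w 1)"
    using 1 assms(2) by (intro prob_no_WEF_alloc_ge) auto
  ultimately show ?case
    by (simp add: Let_def)
qed

end
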